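(* Let $E$ be an elliptic curve over $\mathbb{R}$, $P_1,\ldots,P_n\in E(\mathbb{R})$ linearly independent, with attached $q$ and $u_1,\ldots,u_n$ (normalized so that $q<|u_i|<1$ if $q>0$ and $q^2<u_i<1$ if $q<0$), and suppose $u_1,\ldots,u_k<0$, $u_{k+1},\ldots,u_n>0$ for some $0\le k\le n$. Then $\theta(u_i,q)>0$ for every $i$.
   Context: $\theta(x,q)=(1-x)\prod_{m\ge1}\frac{(1-q^mx)(1-q^mx^{-1})}{(1-q^m)^2}$ for real $x\notin q^{\mathbb{Z}}$, $0<|q|<1$. Tate parametrization: for $E/\mathbb{R}$ there is a unique real $q$, $0<|q|<1$, and an $\mathbb{R}$-analytic group isomorphism $\psi:\mathbb{R}^*/q^{\mathbb{Z}}\to E(\mathbb{R})$ (restriction of an isomorphism $\mathbb{C}^*/q^{\mathbb{Z}}\to E(\mathbb{C})$ commuting with conjugation, from Tate's uniformization of $E_q\cong_{\mathbb{R}}E$); $u_i\in\mathbb{R}^*$ is the normalized representative of $\psi^{-1}(P_i)$. *)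

theory Defs
  imports "HOL-Analysis.Analysis"
begin

definition theta :: "real \<Rightarrow> real \<Rightarrow> real" where
  "theta x q = (1 - x) *
     (\<Prod>m. (1 - q ^ (Suc m) * x) * (1 - q ^ (Suc m) / x) / (1 - q ^ (Suc m))\<^sup>2)"

text \<open>Elliptic curves over R in short Weierstrass form y^2 = x^3 + a x + b
  (every elliptic curve over R is R-isomorphic to one of these).
  A point is None (the point at infinity O) or Some (x,y).\<close>
type_synonym ec_point = "(real \<times> real) option"

definition ec_nonsingular :: "real \<Rightarrow> real \<Rightarrow> bool" where
  "ec_nonsingular a b \<longleftrightarrow> 4 * a ^ 3 + 27 * b ^ 2 \<noteq> 0"

definition on_curve :: "real \<Rightarrow> real \<Rightarrow> ec_point \<Rightarrow> bool" where
  "on_curve a b P = (case P of None \<Rightarrow> True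
                    | Some (x, y) \<Rightarrow> y ^ 2 = x ^ 3 + a * x + b)"

definition ec_neg :: "ec_point \<Rightarrow> ec_point" where
  "ec_neg P = (case P of None \<Rightarrow> None | Some (x, y) \<Rightarrow> Some (x, - y))"

definition ec_add :: "real \<Rightarrow> ec_point \<Rightarrow> ec_point \<Rightarrow> ec_point" where
  "ec_add a P Q = (case P of None \<Rightarrow> Q | Some (x1, y1) \<Rightarrow>
     (case Q of None \<Rightarrow> P | Some (x2, y2) \<Rightarrow>
       (if x1 = x2 \<and> y1 = - y2 then None
        else let l = (if x1 = x2 then (3 * x1 ^ 2 + a) / (2 * y1)
                      else (y2 - y1) / (x2 - x1));
                 x3 = l ^ 2 - x1 - x2;
                 y3 = l * (x1 - x3) - y1
             in Some (x3, y3))))"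

fun ec_nsmul :: "real \<Rightarrow> nat \<Rightarrow> ec_point \<Rightarrow> ec_point" where
  "ec_nsmul a 0 P = None"
| "ec_nsmul a (Suc n) P = ec_add a P (ec_nsmul a n P)"

definition ec_zsmul :: "real \<Rightarrow> int \<Rightarrow> ec_point \<Rightarrow> ec_point" where
  "ec_zsmul a c P = (if c \<ge> 0 then ec_nsmul a (nat c) P
                     else ec_neg (ec_nsmul a (nat (- c)) P))"

fun ec_lincomb :: "real \<Rightarrow> (nat \<Rightarrow> int) \<Rightarrow> (nat \<Rightarrow> ec_point) \<Rightarrow> nat \<Rightarrow> ec_point" where
  "ec_lincomb a c P 0 = None"
| "ec_lincomb a c P (Suc n) = ec_add a (ec_lincomb a c P n) (ec_zsmul a (c n) (P n))"

definition ec_lin_indep :: "real \<Rightarrow> (nat \<Rightarrow> ec_point) \<Rightarrow> nat \<Rightarrow> bool" where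
  "ec_lin_indep a P n \<longleftrightarrow>
     (\<forall>c :: nat \<Rightarrow> int. ec_lincomb a c P n = None \<longrightarrow> (\<forall>i<n. c i = 0))"

text \<open>psi : R^*/q^Z \<rightarrow> E(R) a group isomorphism, represented as a map on R^*
  that is a homomorphism, onto E(R), with fibres exactly the cosets of q^Z.\<close>
definition tate_iso :: "real \<Rightarrow> real \<Rightarrow> real \<Rightarrow> (real \<Rightarrow> ec_point) \<Rightarrow> bool" where
  "tate_iso a b q psi \<longleftrightarrow>
     (\<forall>x. x \<noteq> 0 \<longrightarrow> on_curve a b (psi x)) \<and>
     (\<forall>x y. x \<noteq> 0 \<longrightarrow> y \<noteq> 0 \<longrightarrow> psi (x * y) = ec_add a (psi x) (psi y)) \<and>
     (\<forall>x y. x \<noteq> 0 \<longrightarrow> y \<noteq> 0 \<longrightarrow> (psi x = psi y \<longleftrightarrow> (\<exists>k::int. x = q powi k * y))) \<and>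
     (\<forall>P. on_curve a b P \<longrightarrow> (\<exists>x. x \<noteq> 0 \<and> psi x = P))"

definition tate_normalized :: "real \<Rightarrow> real \<Rightarrow> bool" where
  "tate_normalized q u \<longleftrightarrow>
     (q > 0 \<longrightarrow> q < \<bar>u\<bar> \<and> \<bar>u\<bar> < 1) \<and> (q < 0 \<longrightarrow> q ^ 2 < u \<and> u < 1)"

end

theory Submission
  imports Defs
begin

text \<open>For a normalized u every factor of the product is positive: 1 - q^m u > 0 since
  |q^m u| < 1, and 1 - q^m/u > 0 since q^m < |u| when q > 0, while for q < 0 we have
  u > q^2 \<ge> |q^m| for m \<ge> 2 and q/u < 0. Each factor is 1 + O(|q|^m), so the product
  converges absolutely to a positive number, and 1 - u > 0 as u < 1.\<close>

definition theta_factor :: "real \<Rightarrow> real \<Rightarrow> nat \<Rightarrow> real" where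
  "theta_factor x q m = (1 - q ^ Suc m * x) * (1 - q ^ Suc m / x) / (1 - q ^ Suc m)\<^sup>2"

lemma theta_eq_prodinf_theta_factor: "theta x q = (1 - x) * prodinf (theta_factor x q)"
  unfolding theta_def theta_factor_def[abs_def] ..

lemma prodinf_pos_if_summable_abs_diff_one:
  fixes f :: "nat \<Rightarrow> real"
  assumes "\<And>n. f n > 0" and "summable (\<lambda>n. \<bar>f n - 1\<bar>)"
  shows "prodinf f > 0"
proof -
  have "convergent_prod f"
    using assms(2) by (intro abs_convergent_prod_imp_convergent_prod summable_imp_abs_convergent_prod) simp
  then show ?thesis
    using has_prod_pos assms(1) convergent_prod_has_prod by blast
qed

lemma abs_power_Suc_le_abs: "\<bar>x::real\<bar> \<le> 1 \<Longrightarrow> \<bar>x ^ Suc m\<bar> \<le> \<bar>x\<bar>"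
  unfolding power_abs by (simp add: mult_left_le power_le_one)

lemma tate_normalized_abs_less_one:
  assumes "q \<noteq> 0" and "tate_normalized q u"
  shows "\<bar>u\<bar> < 1"
proof (cases "q > 0")
  case False
  with assms have "q\<^sup>2 < u" "u < 1" by (auto simp: tate_normalized_def)
  moreover have "0 \<le> q\<^sup>2" by simp
  ultimately show ?thesis by linarith
qed (use assms in \<open>simp add: tate_normalized_def\<close>)

lemma tate_normalized_less_one: "q \<noteq> 0 \<Longrightarrow> tate_normalized q u \<Longrightarrow> u < 1"
  using tate_normalized_abs_less_one by fastforce

lemma tate_normalized_power_div_less_one:
  fixes q u :: real
  assumes "\<bar>q\<bar> < 1" and "u \<noteq> 0" and "tate_normalized q u"
  shows "q ^ Suc m / u < 1"
proof (cases "q > 0")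
  case True
  then have "q ^ Suc m \<le> q" "q < \<bar>u\<bar>"
    using assms abs_power_Suc_le_abs[of q m] by (auto simp: tate_normalized_def)
  show ?thesis
  proof (cases "u > 0")
    case True
    with \<open>q ^ Suc m \<le> q\<close> \<open>q < \<bar>u\<bar>\<close> have "q ^ Suc m < u" by simp
    with True show ?thesis by simp
  next
    case False
    with \<open>u \<noteq> 0\<close> have "q ^ Suc m / u < 0"
      using \<open>q > 0\<close> by (simp add: divide_pos_neg)
    then show ?thesis by simp
  qed
next
  case False
  show ?thesis
  proof (cases "q = 0")
    case False
    with \<open>\<not> q > 0\<close> have "q < 0" by simp
    with assms have "q\<^sup>2 < u" by (simp add: tate_normalized_def)
    then have "u > 0" using zero_le_power2[of q] by linarith
    show ?thesis
    proof (cases m)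
      case 0
      then show ?thesis using \<open>q < 0\<close> \<open>u > 0\<close> by (simp add: divide_neg_pos)
    next
      case (Suc j)
      have "\<bar>q ^ Suc m\<bar> = q\<^sup>2 * \<bar>q\<bar> ^ j"
        using Suc by (simp add: abs_mult power_abs power2_eq_square)
      also have "\<dots> \<le> q\<^sup>2"
        using assms(1) by (intro mult_left_le) (simp_all add: power_le_one)
      finally have "q ^ Suc m < u" using \<open>q\<^sup>2 < u\<close> by linarith
      then show ?thesis using \<open>u > 0\<close> by simp
    qed
  qed (use \<open>u \<noteq> 0\<close> in simp)
qed

lemma theta_factor_pos:
  fixes q u :: real
  assumes "0 < \<bar>q\<bar>" "\<bar>q\<bar> < 1" "u \<noteq> 0" "tate_normalized q u"
  shows "theta_factor u q m > 0"
proof -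
  have "\<bar>q ^ Suc m\<bar> < 1"
    using abs_power_Suc_le_abs[of q m] assms(2) by linarith
  moreover have "\<bar>u\<bar> < 1"
    using tate_normalized_abs_less_one assms by auto
  ultimately have "\<bar>q ^ Suc m\<bar> * \<bar>u\<bar> < 1 * 1"
    by (rule abs_mult_less)
  then have "\<bar>q ^ Suc m * u\<bar> < 1"
    by (simp only: abs_mult mult_1_right)
  moreover have "q ^ Suc m / u < 1"
    using tate_normalized_power_div_less_one assms by blast
  moreover have "(1 - q ^ Suc m)\<^sup>2 > 0"
    using \<open>\<bar>q ^ Suc m\<bar> < 1\<close> by (simp add: abs_less_iff)
  ultimately show ?thesis
    unfolding theta_factor_def by (simp add: abs_less_iff)
qed

lemma theta_factor_minus_one:
  fixes q x :: real
  assumes "q ^ Suc m \<noteq> 1" and "x \<noteq> 0"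
  shows "theta_factor x q m - 1 = q ^ Suc m * (2 - x - 1 / x) / (1 - q ^ Suc m)\<^sup>2"
proof -
  define y where "y = q ^ Suc m"
  have "(1 - y * x) * (1 - y / x) = (1 - y)\<^sup>2 + y * (2 - x - 1 / x)"
    using assms(2) by (simp add: field_simps power2_eq_square)
  moreover have "(1 - y)\<^sup>2 \<noteq> 0"
    using assms(1) by (simp add: y_def)
  ultimately show ?thesis
    unfolding theta_factor_def y_def[symmetric] by (simp add: add_divide_distrib)
qed

lemma summable_abs_theta_factor_minus_one:
  fixes q x :: real
  assumes "\<bar>q\<bar> < 1" and "x \<noteq> 0"
  shows "summable (\<lambda>m. \<bar>theta_factor x q m - 1\<bar>)"
proof (rule summable_comparison_test'[where N = 0])
  define c where "c = \<bar>2 - x - 1 / x\<bar>"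
  show "summable (\<lambda>m. c / (1 - \<bar>q\<bar>)\<^sup>2 * \<bar>q\<bar> ^ Suc m)"
    using assms(1) by (intro summable_mult) (simp add: summable_geometric)
  fix m :: nat
  have "1 - \<bar>q\<bar> \<le> 1 - q ^ Suc m"
    using abs_power_Suc_le_abs[of q m] assms(1) by auto
  then have denom: "(1 - \<bar>q\<bar>)\<^sup>2 \<le> (1 - q ^ Suc m)\<^sup>2" "(1 - \<bar>q\<bar>)\<^sup>2 > 0"
    using assms(1) by (auto intro: power_mono)
  then have "0 < (1 - q ^ Suc m)\<^sup>2 * (1 - \<bar>q\<bar>)\<^sup>2"
    by (intro mult_pos_pos) linarith+
  have "q ^ Suc m \<noteq> 1"
    using \<open>1 - \<bar>q\<bar> \<le> 1 - q ^ Suc m\<close> assms(1) by auto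
  then have "\<bar>theta_factor x q m - 1\<bar> = \<bar>q\<bar> ^ Suc m * c / (1 - q ^ Suc m)\<^sup>2"
    by (simp add: theta_factor_minus_one assms(2) c_def abs_mult power_abs del: power_Suc)
  also have "\<dots> \<le> \<bar>q\<bar> ^ Suc m * c / (1 - \<bar>q\<bar>)\<^sup>2"
    using denom \<open>0 < (1 - q ^ Suc m)\<^sup>2 * (1 - \<bar>q\<bar>)\<^sup>2\<close>
    by (intro divide_left_mono) (auto simp: c_def)
  finally show "norm \<bar>theta_factor x q m - 1\<bar> \<le> c / (1 - \<bar>q\<bar>)\<^sup>2 * \<bar>q\<bar> ^ Suc m"
    by (simp add: mult_ac)
qed

lemma theta_pos_if_tate_normalized:
  fixes q u :: real
  assumes "0 < \<bar>q\<bar>" "\<bar>q\<bar> < 1" "u \<noteq> 0" "tate_normalized q u"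
  shows "theta u q > 0"
proof -
  have "prodinf (theta_factor u q) > 0"
    using theta_factor_pos[OF assms] summable_abs_theta_factor_minus_one[OF assms(2,3)]
    by (rule prodinf_pos_if_summable_abs_diff_one)
  moreover have "1 - u > 0"
    using tate_normalized_less_one assms by force
  ultimately show ?thesis
    by (simp add: theta_eq_prodinf_theta_factor)
qed

theorem corollary3p2:
  fixes a b q :: real and psi :: "real \<Rightarrow> ec_point"
    and P :: "nat \<Rightarrow> ec_point" and u :: "nat \<Rightarrow> real" and n k :: nat
  assumes "ec_nonsingular a b"
    and "0 < \<bar>q\<bar>" and "\<bar>q\<bar> < 1"
    and "tate_iso a b q psi"
    and "\<forall>i<n. on_curve a b (P i)"
    and "ec_lin_indep a P n"
    and "\<forall>i<n. u i \<noteq> 0 \<and> tate_normalized q (u i) \<and> psi (u i) = P i"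
    and "k \<le> n"
    and "\<forall>i<k. u i < 0"
    and "\<forall>i. k \<le> i \<and> i < n \<longrightarrow> u i > 0"
  shows "\<forall>i<n. theta (u i) q > 0"
  using assms(2,3,7) theta_pos_if_tate_normalized by blast

end
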